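(* Let $\mathbb{K}=(G,M,I)$ be a finite formal context and let $S\subseteq\mathfrak{B}(\mathbb{K})$ be a set of formal concepts. Then $I_S=\bigcup_{(A,B)\in\mathfrak{B}(\mathbb{K})\setminus S}A\times B$, $G_S=\bigcup_{(A,B)\in\mathfrak{B}(\mathbb{K})\setminus S}A$, and $M_S=\bigcup_{(A,B)\in\mathfrak{B}(\mathbb{K})\setminus S}B$.
   Context: A formal context $(G,M,I)$ consists of sets $G$ (objects), $M$ (attributes) and $I\subseteq G\times M$. For $A\subseteq G$ let $A'=\{m\in M\mid (g,m)\in I\ \forall g\in A\}$ and for $B\subseteq M$ let $B'=\{g\in G\mid (g,m)\in I\ \forall m\in B\}$. A formal concept is a pair $(A,B)$ with $A'=B$, $B'=A$; $\mathfrak{B}(\mathbb{K})$ is the set of all formal concepts. For $S\subseteq\mathfrak{B}(\mathbb{K})$ the $S$-removed incidences, objects and attributes are $I_S=I\setminus\big(\bigcup_{(A,B)\in S}A\times B\setminus\bigcup_{(A,B)\in\mathfrak{B}(\mathbb{K})\setminus S}A\times B\big)$, $G_S=G\setminus\big(\bigcup_{(A,B)\in S}A\setminus\bigcup_{(A,B)\in\mathfrak{B}(\mathbb{K})\setminus S}A\big)$, $M_S=M\setminus\big(\bigcup_{(A,B)\in S}B\setminus\bigcup_{(A,B)\in\mathfrak{B}(\mathbb{K})\setminus S}B\big)$. *)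

theory Defs
  imports Main
begin

definition formal_context :: "'g set \<Rightarrow> 'm set \<Rightarrow> ('g \<times> 'm) set \<Rightarrow> bool" where
  "formal_context G M I \<longleftrightarrow> I \<subseteq> G \<times> M"

definition obj_deriv :: "'m set \<Rightarrow> ('g \<times> 'm) set \<Rightarrow> 'g set \<Rightarrow> 'm set" where
  "obj_deriv M I A = {m \<in> M. \<forall>g\<in>A. (g, m) \<in> I}"

definition attr_deriv :: "'g set \<Rightarrow> ('g \<times> 'm) set \<Rightarrow> 'm set \<Rightarrow> 'g set" where
  "attr_deriv G I B = {g \<in> G. \<forall>m\<in>B. (g, m) \<in> I}"

definition concepts :: "'g set \<Rightarrow> 'm set \<Rightarrow> ('g \<times> 'm) set \<Rightarrow> ('g set \<times> 'm set) set" where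
  "concepts G M I = {(A, B). A \<subseteq> G \<and> B \<subseteq> M \<and> obj_deriv M I A = B \<and> attr_deriv G I B = A}"

definition removed_incidences ::
  "'g set \<Rightarrow> 'm set \<Rightarrow> ('g \<times> 'm) set \<Rightarrow> ('g set \<times> 'm set) set \<Rightarrow> ('g \<times> 'm) set" where
  "removed_incidences G M I S =
     I - ((\<Union>(A, B)\<in>S. A \<times> B) - (\<Union>(A, B)\<in>concepts G M I - S. A \<times> B))"

definition removed_objects ::
  "'g set \<Rightarrow> 'm set \<Rightarrow> ('g \<times> 'm) set \<Rightarrow> ('g set \<times> 'm set) set \<Rightarrow> 'g set" where
  "removed_objects G M I S =
     G - ((\<Union>(A, B)\<in>S. A) - (\<Union>(A, B)\<in>concepts G M I - S. A))"

definition removed_attributes ::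
  "'g set \<Rightarrow> 'm set \<Rightarrow> ('g \<times> 'm) set \<Rightarrow> ('g set \<times> 'm set) set \<Rightarrow> 'm set" where
  "removed_attributes G M I S =
     M - ((\<Union>(A, B)\<in>S. B) - (\<Union>(A, B)\<in>concepts G M I - S. B))"

end

theory Submission
  imports Defs
begin

text \<open>Every incidence \<open>(g, m)\<close> lies in the object concept \<open>({g}'', {g}')\<close>, every object in
  its object concept and every attribute in its attribute concept, while every concept
  \<open>(A, B)\<close> satisfies \<open>A \<times> B \<subseteq> I\<close>. Hence \<open>I\<close>, \<open>G\<close> and \<open>M\<close> are the unions of the
  products, extents and intents of all concepts, and removing what is covered only by
  concepts in \<open>S\<close> leaves exactly the union over the remaining concepts.\<close>

lemma concept_extent_intent_subset:
  assumes "(A, B) \<in> concepts G M I"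
  shows "A \<subseteq> G" "B \<subseteq> M"
  using assms unfolding concepts_def by auto

lemma concept_product_subset_incidence:
  assumes "(A, B) \<in> concepts G M I"
  shows "A \<times> B \<subseteq> I"
proof -
  have "A = attr_deriv G I B"
    using assms unfolding concepts_def by auto
  then show ?thesis
    unfolding attr_deriv_def by blast
qed

lemma obj_deriv_concept:
  assumes "A \<subseteq> G"
  shows "(attr_deriv G I (obj_deriv M I A), obj_deriv M I A) \<in> concepts G M I"
proof -
  have "obj_deriv M I (attr_deriv G I (obj_deriv M I A)) = obj_deriv M I A"
    using assms unfolding obj_deriv_def attr_deriv_def by blast
  then show ?thesis
    unfolding concepts_def by (auto simp: attr_deriv_def obj_deriv_def)
qed

lemma attr_deriv_concept:
  assumes "B \<subseteq> M"
  shows "(attr_deriv G I B, obj_deriv M I (attr_deriv G I B)) \<in> concepts G M I"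
proof -
  have "attr_deriv G I (obj_deriv M I (attr_deriv G I B)) = attr_deriv G I B"
    using assms unfolding obj_deriv_def attr_deriv_def by blast
  then show ?thesis
    unfolding concepts_def by (auto simp: attr_deriv_def obj_deriv_def)
qed

lemma Union_concept_products:
  assumes "formal_context G M I"
  shows "(\<Union>(A, B)\<in>concepts G M I. A \<times> B) = I"
proof
  show "(\<Union>(A, B)\<in>concepts G M I. A \<times> B) \<subseteq> I"
    using concept_product_subset_incidence by blast
  show "I \<subseteq> (\<Union>(A, B)\<in>concepts G M I. A \<times> B)"
  proof
    fix p assume "p \<in> I"
    then obtain g m where p: "p = (g, m)" "(g, m) \<in> I" "g \<in> G" "m \<in> M"
      using assms unfolding formal_context_def by auto
    then have "p \<in> attr_deriv G I (obj_deriv M I {g}) \<times> obj_deriv M I {g}"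
      unfolding attr_deriv_def obj_deriv_def by simp
    with obj_deriv_concept[of "{g}" G I M] \<open>g \<in> G\<close>
    show "p \<in> (\<Union>(A, B)\<in>concepts G M I. A \<times> B)" by blast
  qed
qed

lemma Union_concept_extents: "(\<Union>(A, B)\<in>concepts G M I. A) = G"
proof
  show "(\<Union>(A, B)\<in>concepts G M I. A) \<subseteq> G"
    using concept_extent_intent_subset(1) by blast
  show "G \<subseteq> (\<Union>(A, B)\<in>concepts G M I. A)"
  proof
    fix g assume "g \<in> G"
    then have "g \<in> attr_deriv G I (obj_deriv M I {g})"
      unfolding attr_deriv_def obj_deriv_def by simp
    with obj_deriv_concept[of "{g}" G I M] \<open>g \<in> G\<close>
    show "g \<in> (\<Union>(A, B)\<in>concepts G M I. A)" by blast
  qed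
qed

lemma Union_concept_intents: "(\<Union>(A, B)\<in>concepts G M I. B) = M"
proof
  show "(\<Union>(A, B)\<in>concepts G M I. B) \<subseteq> M"
    using concept_extent_intent_subset(2) by blast
  show "M \<subseteq> (\<Union>(A, B)\<in>concepts G M I. B)"
  proof
    fix m assume "m \<in> M"
    then have "m \<in> obj_deriv M I (attr_deriv G I {m})"
      unfolding attr_deriv_def obj_deriv_def by simp
    with attr_deriv_concept[of "{m}" M G I] \<open>m \<in> M\<close>
    show "m \<in> (\<Union>(A, B)\<in>concepts G M I. B)" by blast
  qed
qed

lemma UN_minus_covered_only_by_subset:
  assumes "S \<subseteq> C"
  shows "(\<Union>c\<in>C. f c) - ((\<Union>c\<in>S. f c) - (\<Union>c\<in>C - S. f c)) = (\<Union>c\<in>C - S. f c)"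
  using assms by blast

theorem lemma1:
  fixes G :: "'g set" and M :: "'m set" and I :: "('g \<times> 'm) set"
    and S :: "('g set \<times> 'm set) set"
  assumes "formal_context G M I"
    and "finite G" and "finite M"
    and "S \<subseteq> concepts G M I"
  shows "removed_incidences G M I S = (\<Union>(A, B)\<in>concepts G M I - S. A \<times> B) \<and>
         removed_objects G M I S = (\<Union>(A, B)\<in>concepts G M I - S. A) \<and>
         removed_attributes G M I S = (\<Union>(A, B)\<in>concepts G M I - S. B)"
proof -
  note remove = UN_minus_covered_only_by_subset[OF assms(4)]
  have "removed_incidences G M I S = (\<Union>(A, B)\<in>concepts G M I - S. A \<times> B)"
    unfolding removed_incidences_def
    using remove[of "\<lambda>(A, B). A \<times> B"] by (simp only: Union_concept_products[OF assms(1)])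
  moreover have "removed_objects G M I S = (\<Union>(A, B)\<in>concepts G M I - S. A)"
    unfolding removed_objects_def
    using remove[of "\<lambda>(A, B). A"] by (simp only: Union_concept_extents)
  moreover have "removed_attributes G M I S = (\<Union>(A, B)\<in>concepts G M I - S. B)"
    unfolding removed_attributes_def
    using remove[of "\<lambda>(A, B). B"] by (simp only: Union_concept_intents)
  ultimately show ?thesis by blast
qed

end
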